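(* For all positive integers $n\geq 2$ and $t$, the double Roman domination number of $S(K_n,t)$ is $$\gamma_{dR}(S(K_n,t))=\begin{cases}3\left\lceil\frac{n^t}{n+1}\right\rceil & \text{if } t \text{ is odd},\\[2pt] 3\left\lceil\frac{n^t}{n+1}\right\rceil-1 & \text{if } t \text{ is even}.\end{cases}$$
   Context: For a positive integer $n$ let $[n]=\{1,\dots,n\}$. For positive integers $n,t$, the Sierpiński graph $S(K_n,t)$ is the simple graph with vertex set $[n]^t$ (words $v_1v_2\cdots v_t$ with $v_i\in[n]$), in which $u_1\cdots u_t$ and $v_1\cdots v_t$ are adjacent if and only if there is $s\in[t]$ with $u_j=v_j$ for all $j<s$, $u_s\neq v_s$, and $u_j=v_s$ and $v_j=u_s$ for all $j>s$. A double Roman dominating function on a graph $G=(V,E)$ is a function $f:V\to\{0,1,2,3\}$ such that (i) every vertex $u$ with $f(u)=0$ has either a neighbor $v$ with $f(v)=3$ or two distinct neighbors $w,x$ with $f(w)=f(x)=2$, and (ii) every vertex $u$ with $f(u)=1$ has a neighbor $v$ with $f(v)\geq 3$. Its weight is $\sum_{v\in V}f(v)$, and the double Roman domination number $\gamma_{dR}(G)$ is the minimum weight of a double Roman dominating function on $G$. *)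

theory Defs
  imports Complex_Main
begin

(* Vertex set of the Sierpinski graph S(K_n,t): words of length t over [n] = {1..n},
   represented as lists (position i of the list is letter v_(i+1)). *)
definition sierp_vertices :: "nat \<Rightarrow> nat \<Rightarrow> nat list set" where
  "sierp_vertices n t = {v. length v = t \<and> set v \<subseteq> {1..n}}"

definition sierp_adj :: "nat \<Rightarrow> nat \<Rightarrow> nat list \<Rightarrow> nat list \<Rightarrow> bool" where
  "sierp_adj n t u v \<longleftrightarrow>
     u \<in> sierp_vertices n t \<and> v \<in> sierp_vertices n t \<and>
     (\<exists>s<t. (\<forall>j<s. u ! j = v ! j) \<and> u ! s \<noteq> v ! s \<and>
            (\<forall>j. s < j \<and> j < t \<longrightarrow> u ! j = v ! s \<and> v ! j = u ! s))"

definition is_drdf :: "'a set \<Rightarrow> ('a \<Rightarrow> 'a \<Rightarrow> bool) \<Rightarrow> ('a \<Rightarrow> nat) \<Rightarrow> bool" where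
  "is_drdf V E f \<longleftrightarrow>
     (\<forall>v\<in>V. f v \<le> 3) \<and>
     (\<forall>u\<in>V. f u = 0 \<longrightarrow>
        (\<exists>v\<in>V. E u v \<and> f v = 3) \<or>
        (\<exists>w\<in>V. \<exists>x\<in>V. w \<noteq> x \<and> E u w \<and> E u x \<and> f w = 2 \<and> f x = 2)) \<and>
     (\<forall>u\<in>V. f u = 1 \<longrightarrow> (\<exists>v\<in>V. E u v \<and> f v \<ge> 3))"

definition drdf_weight :: "'a set \<Rightarrow> ('a \<Rightarrow> nat) \<Rightarrow> nat" where
  "drdf_weight V f = (\<Sum>v\<in>V. f v)"

definition gamma_dR :: "'a set \<Rightarrow> ('a \<Rightarrow> 'a \<Rightarrow> bool) \<Rightarrow> nat" where
  "gamma_dR V E = Min {drdf_weight V f | f. is_drdf V E f}"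

end

theory Submission
  imports Defs
begin

text \<open>
  Upper bound: \<open>S(K\<^sub>n,t)\<close> consists of \<open>n\<close> copies of \<open>S(K\<^sub>n,t-1)\<close> joined by bridges
  between extreme vertices, so dominating sets of the copies can be glued along the bridges.
  This gives sets of about \<open>n\<^sup>t/(n+1)\<close> vertices dominating the whole graph (\<open>t\<close> odd) or all
  but one extreme vertex (\<open>t\<close> even); label them 3 and the missed vertex 2.

  Lower bound: after relabelling 1s as 0s, let \<open>a\<close> and \<open>b\<close> be the numbers of 3s and 2s.
  Every vertex gets charge 2 from its own label or from its labelled neighbours, and since all
  degrees are at most \<open>n\<close>, counting charges gives \<open>2n\<^sup>t \<le> 2(n+1)a + (n+2)b\<close>, i.e.
  \<open>2(n+1)(3a+2b) \<ge> 6n\<^sup>t + (n-2)b\<close>. This is enough unless every charge is exactly 2 and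
  \<open>b\<close> is tiny (\<open>n = 2\<close>, or \<open>t\<close> even and \<open>b = 2\<close>). These extremal configurations are
  excluded using that the extreme vertices have degree \<open>n-1\<close>, that \<open>S(K\<^sub>n,t)\<close> is connected,
  and that every 4-cycle has a chord.
\<close>

section \<open>Arithmetic\<close>

lemma power_mod_Suc_self:
  assumes "1 \<le> (n::nat)"
  shows "n ^ t mod (n + 1) = (if even t then 1 else n)"
proof (induction t)
  case (Suc t)
  have "n * n mod (n + 1) = 1"
  proof -
    have "n * n = 1 + (n - 1) * (n + 1)" using assms by (cases n) (auto simp: algebra_simps)
    then have "n * n mod (n + 1) = (1 + (n - 1) * (n + 1)) mod (n + 1)" by (simp only:)
    also have "\<dots> = 1 mod (n + 1)" by (rule mod_mult_self1)
    also have "\<dots> = 1" using assms by simp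
    finally show ?thesis .
  qed
  then show ?case using Suc assms by (auto simp: mod_mult_right_eq[of n "n ^ t", symmetric])
qed (use assms in simp)

lemma ceiling_of_nat_divide:
  assumes m: "0 < m" and "(x::nat) mod m \<noteq> 0"
  shows "\<lceil>real x / real m\<rceil> = int (x div m) + 1"
proof (rule ceiling_unique)
  have x: "real x = real (x div m) * real m + real (x mod m)"
    by (metis of_nat_add of_nat_mult div_mult_mod_eq)
  have "0 < real (x mod m)" "real (x mod m) < real m" using assms m by simp_all
  with m show "real_of_int (int (x div m) + 1) - 1 < real x / real m"
    and "real x / real m \<le> real_of_int (int (x div m) + 1)"
    unfolding x by (simp_all add: field_simps)
qed

section \<open>Double Roman domination on finite graphs\<close>

definition nbhd :: "('a \<Rightarrow> 'a \<Rightarrow> bool) \<Rightarrow> 'a \<Rightarrow> 'a set" where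
  "nbhd E u = {v. E u v}"

definition dominated_by :: "('a \<Rightarrow> 'a \<Rightarrow> bool) \<Rightarrow> 'a set \<Rightarrow> 'a \<Rightarrow> bool" where
  "dominated_by E C v \<longleftrightarrow> v \<in> C \<or> (\<exists>c\<in>C. E v c)"

lemma dominated_by_mono: "dominated_by E C v \<Longrightarrow> C \<subseteq> C' \<Longrightarrow> dominated_by E C' v"
  unfolding dominated_by_def by blast

lemma dominated_by_adj: "c \<in> C \<Longrightarrow> E v c \<Longrightarrow> dominated_by E C v"
  unfolding dominated_by_def by blast

lemma is_drdf_dominating_set:
  assumes "C \<subseteq> V" and "\<And>v. v \<in> V \<Longrightarrow> v \<notin> X \<Longrightarrow> dominated_by E C v"
  shows "is_drdf V E (\<lambda>v. if v \<in> C then 3 else if v \<in> X then 2 else 0)"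
  unfolding is_drdf_def
proof (intro conjI ballI impI)
  fix u assume "u \<in> V" and "(if u \<in> C then 3 else if u \<in> X then 2 else 0) = (0::nat)"
  then have "dominated_by E C u" "u \<notin> C" using assms(2) by (auto split: if_splits)
  then obtain c where "c \<in> C" "E u c" unfolding dominated_by_def by blast
  with assms(1) show "(\<exists>v\<in>V. E u v \<and> (if v \<in> C then 3 else if v \<in> X then 2 else 0) = (3::nat)) \<or>
      (\<exists>w\<in>V. \<exists>x\<in>V. w \<noteq> x \<and> E u w \<and> E u x \<and>
        (if w \<in> C then 3 else if w \<in> X then 2 else 0) = (2::nat) \<and>
        (if x \<in> C then 3 else if x \<in> X then 2 else 0) = (2::nat))"
    by auto
qed (auto split: if_splits)

lemma drdf_weight_dominating_set:
  assumes "finite V" and "C \<subseteq> V" and "finite X"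
  shows "drdf_weight V (\<lambda>v. if v \<in> C then 3 else if v \<in> X then 2 else 0) \<le> 3 * card C + 2 * card X"
proof -
  have "drdf_weight V (\<lambda>v. if v \<in> C then 3 else if v \<in> X then 2 else 0)
      \<le> (\<Sum>v\<in>V. (if v \<in> C then 3 else 0) + (if v \<in> X then 2 else 0))"
    unfolding drdf_weight_def by (intro sum_mono) auto
  also have "\<dots> = 3 * card (V \<inter> C) + 2 * card (V \<inter> X)"
    using assms(1) by (simp add: sum.distrib sum.inter_restrict[symmetric])
  also have "\<dots> \<le> 3 * card C + 2 * card X"
    using assms finite_subset[OF assms(2,1)] by (intro add_mono mult_left_mono card_mono) auto
  finally show ?thesis .
qed

lemma is_drdf_drop_ones:
  assumes "is_drdf V E f"
  shows "is_drdf V E (\<lambda>v. if f v = 1 then 0 else f v)" (is "is_drdf V E ?g")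
  unfolding is_drdf_def
proof (intro conjI ballI impI)
  fix u assume u: "u \<in> V" and "?g u = 0"
  then consider "f u = 1" | "f u = 0" by (auto split: if_splits)
  then show "(\<exists>v\<in>V. E u v \<and> ?g v = 3) \<or>
      (\<exists>w\<in>V. \<exists>x\<in>V. w \<noteq> x \<and> E u w \<and> E u x \<and> ?g w = 2 \<and> ?g x = 2)"
  proof cases
    case 1
    with assms u obtain v where "v \<in> V" "E u v" "f v = 3"
      unfolding is_drdf_def by (metis le_antisym)
    then show ?thesis by (intro disjI1 bexI[of _ v]) auto
  next
    case 2
    with assms u show ?thesis unfolding is_drdf_def by force
  qed
qed (use assms in \<open>auto simp: is_drdf_def split: if_splits\<close>)

lemma gamma_dR_eqI:
  assumes "is_drdf V E f" and "drdf_weight V f \<le> k"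
    and "\<And>f. is_drdf V E f \<Longrightarrow> k \<le> drdf_weight V f"
  shows "gamma_dR V E = k"
proof -
  let ?W = "{drdf_weight V f | f. is_drdf V E f}"
  have "drdf_weight V f \<le> 3 * card V" if "is_drdf V E f" for f
    using that sum_mono[of V f "\<lambda>_. 3"] by (simp add: drdf_weight_def is_drdf_def)
  then have "?W \<subseteq> {..3 * card V}" by auto
  then have "finite ?W" by (rule finite_subset) simp
  moreover have "drdf_weight V f \<in> ?W" using assms(1) by blast
  ultimately have "Min ?W \<le> k" and "k \<le> Min ?W"
    using assms(2,3) Min_le[of ?W] Min_in[of ?W] by fastforce+
  then show ?thesis by (simp add: gamma_dR_def)
qed

locale finite_graph =
  fixes V :: "'a set" and E :: "'a \<Rightarrow> 'a \<Rightarrow> bool"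
  assumes finite_vertices: "finite V"
    and adj_sym: "E u v \<Longrightarrow> E v u"
    and adj_in_vertices: "E u v \<Longrightarrow> u \<in> V"
begin

lemma nbhd_subset: "nbhd E u \<subseteq> V"
  using adj_in_vertices adj_sym by (auto simp: nbhd_def)

lemma finite_nbhd [simp]: "finite (nbhd E u)"
  using finite_subset[OF nbhd_subset finite_vertices] .

lemma sum_card_nbhd_Int:
  assumes "X \<subseteq> V"
  shows "(\<Sum>u\<in>V. card (nbhd E u \<inter> X)) = (\<Sum>v\<in>X. card (nbhd E v))"
proof -
  have finite_X: "finite X" using assms finite_vertices finite_subset by blast
  have count: "card (nbhd E u \<inter> Y) = (\<Sum>v\<in>Y. if E u v then 1 else 0)" if "finite Y" for u Y
    using that by (simp add: sum.If_cases nbhd_def Int_commute)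
  have "(\<Sum>u\<in>V. card (nbhd E u \<inter> X)) = (\<Sum>u\<in>V. \<Sum>v\<in>X. if E u v then 1 else 0)"
    using count[OF finite_X] by simp
  also have "\<dots> = (\<Sum>v\<in>X. \<Sum>u\<in>V. if E u v then 1 else 0)"
    by (rule sum.swap)
  also have "\<dots> = (\<Sum>v\<in>X. \<Sum>u\<in>V. if E v u then 1 else 0)"
    by (intro sum.cong refl if_cong) (use adj_sym in blast)+
  also have "\<dots> = (\<Sum>v\<in>X. card (nbhd E v \<inter> V))"
    using count[OF finite_vertices] by simp
  also have "\<dots> = (\<Sum>v\<in>X. card (nbhd E v))"
    using nbhd_subset by (simp add: Int_absorb2)
  finally show ?thesis .
qed

end

locale drdf_without_ones = finite_graph +
  fixes g :: "'a \<Rightarrow> nat"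
  assumes drdf: "is_drdf V E g" and no_ones: "v \<in> V \<Longrightarrow> g v \<noteq> 1"
begin

definition threes :: "'a set" where "threes = {v \<in> V. g v = 3}"

definition twos :: "'a set" where "twos = {v \<in> V. g v = 2}"

text \<open>Every vertex needs charge at least 2: it is labelled itself, or it sees a 3 (worth 2) or
  two 2s (worth 1 each).\<close>

definition charge :: "'a \<Rightarrow> nat" where
  "charge u = (if u \<in> threes \<union> twos then 2 else 0) +
     2 * card (nbhd E u \<inter> threes) + card (nbhd E u \<inter> twos)"

lemma threes_subset: "threes \<subseteq> V" and twos_subset: "twos \<subseteq> V"
  by (auto simp: threes_def twos_def)

lemma finite_threes [simp]: "finite threes" and finite_twos [simp]: "finite twos"
  using finite_subset[OF threes_subset finite_vertices] finite_subset[OF twos_subset finite_vertices] .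

lemma threes_twos_disjoint: "threes \<inter> twos = {}"
  by (auto simp: threes_def twos_def)

lemma label_cases: "v \<in> V \<Longrightarrow> g v = 0 \<or> g v = 2 \<or> g v = 3"
  using drdf no_ones[of v] unfolding is_drdf_def
  by (metis One_nat_def le_Suc_eq le_0_eq numeral_2_eq_2 numeral_3_eq_3)

lemma drdf_weight_eq: "drdf_weight V g = 3 * card threes + 2 * card twos"
proof -
  have "g v = (if v \<in> threes then 3 else 0) + (if v \<in> twos then 2 else 0)" if "v \<in> V" for v
    using label_cases[OF that] that by (auto simp: threes_def twos_def)
  then have "drdf_weight V g = (\<Sum>v\<in>V. (if v \<in> threes then 3 else 0) + (if v \<in> twos then 2 else 0))"
    unfolding drdf_weight_def by (rule sum.cong[OF refl])
  also have "\<dots> = 3 * card (V \<inter> threes) + 2 * card (V \<inter> twos)"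
    using finite_vertices by (simp add: sum.distrib sum.inter_restrict[symmetric])
  finally show ?thesis using threes_subset twos_subset by (simp add: Int_absorb1)
qed

lemma charge_ge_2:
  assumes u: "u \<in> V"
  shows "2 \<le> charge u"
proof (cases "u \<in> threes \<union> twos")
  case True
  then show ?thesis by (simp add: charge_def)
next
  case False
  with u label_cases[OF u] have "g u = 0" by (auto simp: threes_def twos_def)
  with u drdf consider v where "v \<in> V" "E u v" "g v = 3"
    | w x where "w \<in> V" "x \<in> V" "w \<noteq> x" "E u w" "E u x" "g w = 2" "g x = 2"
    unfolding is_drdf_def by blast
  then show ?thesis
  proof cases
    case (1 v)
    then have "v \<in> nbhd E u \<inter> threes" by (simp add: threes_def nbhd_def)
    then have "0 < card (nbhd E u \<inter> threes)" by (auto simp: card_gt_0_iff)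
    then show ?thesis by (simp add: charge_def)
  next
    case (2 w x)
    then have "{w, x} \<subseteq> nbhd E u \<inter> twos" by (simp add: twos_def nbhd_def)
    then have "card {w, x} \<le> card (nbhd E u \<inter> twos)" by (intro card_mono) auto
    with \<open>w \<noteq> x\<close> show ?thesis by (simp add: charge_def)
  qed
qed

lemma sum_charge:
  "(\<Sum>u\<in>V. charge u) = 2 * (card threes + card twos) +
     2 * (\<Sum>v\<in>threes. card (nbhd E v)) + (\<Sum>v\<in>twos. card (nbhd E v))"
proof -
  have "(\<Sum>u\<in>V. if u \<in> threes \<union> twos then 2 else 0) = 2 * card (V \<inter> (threes \<union> twos))"
    using sum.inter_restrict[OF finite_vertices, of "\<lambda>_. 2::nat" "threes \<union> twos"] by simp
  also have "\<dots> = 2 * (card threes + card twos)"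
    using threes_subset twos_subset threes_twos_disjoint
    by (simp add: Int_absorb1 card_Un_disjoint)
  finally show ?thesis
    using sum_card_nbhd_Int[OF threes_subset] sum_card_nbhd_Int[OF twos_subset]
    by (simp add: charge_def sum.distrib flip: sum_distrib_left)
qed

lemma charge_eq_2_if_sum_charge_eq:
  assumes "(\<Sum>u\<in>V. charge u) = 2 * card V" and "u \<in> V"
  shows "charge u = 2"
proof (rule ccontr)
  assume "charge u \<noteq> 2"
  with charge_ge_2[OF assms(2)] have "2 < charge u" by simp
  with assms(2) charge_ge_2 have "(\<Sum>u\<in>V. 2) < (\<Sum>u\<in>V. charge u)"
    by (intro sum_strict_mono_ex1 finite_vertices) auto
  with assms(1) show False by simp
qed

lemma charge_eq_2_near_two:
  assumes "u \<in> V" and "u \<notin> twos" and "v \<in> twos" and "E u v" and "charge u = 2"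
  shows "u \<notin> threes \<and> card (nbhd E u \<inter> twos) = 2"
proof -
  have "v \<in> nbhd E u \<inter> twos" using assms(3,4) by (simp add: nbhd_def)
  then have "0 < card (nbhd E u \<inter> twos)" by (auto simp: card_gt_0_iff)
  moreover have "(if u \<in> threes then 2 else 0) + 2 * card (nbhd E u \<inter> threes) +
      card (nbhd E u \<inter> twos) = 2"
    using assms(2,5) by (simp add: charge_def)
  ultimately show ?thesis by (auto split: if_split_asm) presburger
qed

lemma charge_bound:
  assumes "\<And>v. v \<in> V \<Longrightarrow> card (nbhd E v) \<le> \<Delta>"
  shows "2 * card V \<le> 2 * (\<Delta> + 1) * card threes + (\<Delta> + 2) * card twos"
    and "2 * card V = 2 * (\<Delta> + 1) * card threes + (\<Delta> + 2) * card twos \<Longrightarrow>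
      (\<forall>u\<in>V. charge u = 2) \<and> (\<forall>v\<in>twos. card (nbhd E v) = \<Delta>)"
proof -
  have "(\<Sum>u\<in>V. 2) \<le> (\<Sum>u\<in>V. charge u)" by (intro sum_mono charge_ge_2)
  then have lower: "2 * card V \<le> (\<Sum>u\<in>V. charge u)" by simp
  have "(\<Sum>v\<in>threes. card (nbhd E v)) \<le> (\<Sum>v\<in>threes. \<Delta>)"
    using assms threes_subset by (intro sum_mono) auto
  then have deg_threes: "(\<Sum>v\<in>threes. card (nbhd E v)) \<le> \<Delta> * card threes"
    by (simp add: mult.commute)
  have deg_le: "\<And>v. v \<in> twos \<Longrightarrow> card (nbhd E v) \<le> \<Delta>"
    using assms twos_subset by auto
  then have "(\<Sum>v\<in>twos. card (nbhd E v)) \<le> (\<Sum>v\<in>twos. \<Delta>)" by (rule sum_mono)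
  then have deg_twos: "(\<Sum>v\<in>twos. card (nbhd E v)) \<le> \<Delta> * card twos"
    by (simp add: mult.commute)
  show "2 * card V \<le> 2 * (\<Delta> + 1) * card threes + (\<Delta> + 2) * card twos"
    using lower deg_threes deg_twos sum_charge by (simp add: algebra_simps)
  assume tight: "2 * card V = 2 * (\<Delta> + 1) * card threes + (\<Delta> + 2) * card twos"
  then have "(\<Sum>u\<in>V. charge u) = 2 * card V"
    and "(\<Sum>v\<in>twos. card (nbhd E v)) = (\<Sum>v\<in>twos. \<Delta>)"
    using lower deg_threes deg_twos sum_charge by (simp_all add: algebra_simps)
  moreover have "card (nbhd E v) = \<Delta>"
    if "(\<Sum>v\<in>twos. card (nbhd E v)) = (\<Sum>v\<in>twos. \<Delta>)" "v \<in> twos" for v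
  proof (rule ccontr)
    assume "card (nbhd E v) \<noteq> \<Delta>"
    with deg_le that(2) have "(\<Sum>v\<in>twos. card (nbhd E v)) < (\<Sum>v\<in>twos. \<Delta>)"
      by (intro sum_strict_mono_ex1 finite_twos) (auto intro: le_neq_implies_less)
    with that(1) show False by simp
  qed
  ultimately show "(\<forall>u\<in>V. charge u = 2) \<and> (\<forall>v\<in>twos. card (nbhd E v) = \<Delta>)"
    using charge_eq_2_if_sum_charge_eq by blast
qed

end

section \<open>Sierpinski graphs\<close>

lemma Cons_in_sierp_vertices [simp]:
  "a # u \<in> sierp_vertices n (Suc t) \<longleftrightarrow> a \<in> {1..n} \<and> u \<in> sierp_vertices n t"
  by (auto simp: sierp_vertices_def)

lemma sierp_vertices_0: "sierp_vertices n 0 = {[]}"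
  by (auto simp: sierp_vertices_def)

lemma sierp_vertices_SucE:
  assumes "v \<in> sierp_vertices n (Suc t)"
  obtains a u where "v = a # u" "a \<in> {1..n}" "u \<in> sierp_vertices n t"
  using assms by (cases v) (auto simp: sierp_vertices_def)

lemma replicate_in_sierp_vertices: "c \<in> {1..n} \<Longrightarrow> replicate t c \<in> sierp_vertices n t"
  by (auto simp: sierp_vertices_def)

lemma finite_sierp_vertices: "finite (sierp_vertices n t)"
  using finite_lists_length_eq[of "{1..n}" t] by (simp add: sierp_vertices_def conj_commute)

lemma card_sierp_vertices: "card (sierp_vertices n t) = n ^ t"
  using card_lists_length_eq[of "{1..n}" t] by (simp add: sierp_vertices_def conj_commute)

lemma sierp_adj_sym: "sierp_adj n t u v \<Longrightarrow> sierp_adj n t v u"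
  unfolding sierp_adj_def by metis

lemma sierp_adj_irrefl: "\<not> sierp_adj n t u u"
  by (auto simp: sierp_adj_def)

lemma sierp_adj_in_vertices:
  "sierp_adj n t u v \<Longrightarrow> u \<in> sierp_vertices n t \<and> v \<in> sierp_vertices n t"
  by (auto simp: sierp_adj_def)

lemma sierp_adj_0: "\<not> sierp_adj n 0 u v"
  by (auto simp: sierp_adj_def)

lemma sierp_adj_Cons:
  "sierp_adj n (Suc t) (a # u) (b # v) \<longleftrightarrow>
     (a \<in> {1..n} \<and> b \<in> {1..n} \<and> u \<in> sierp_vertices n t \<and> v \<in> sierp_vertices n t) \<and>
     (a = b \<and> sierp_adj n t u v \<or> a \<noteq> b \<and> u = replicate t b \<and> v = replicate t a)"
    (is "?adj \<longleftrightarrow> ?vs \<and> (?inner \<or> ?bridge)")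
proof
  assume adj: ?adj
  then have vs: ?vs and len: "length u = t" "length v = t"
    by (auto simp: sierp_adj_def sierp_vertices_def)
  from adj obtain s where s: "s < Suc t" "\<forall>j<s. (a#u) ! j = (b#v) ! j" "(a#u) ! s \<noteq> (b#v) ! s"
    "\<And>j. s < j \<Longrightarrow> j < Suc t \<Longrightarrow> (a#u) ! j = (b#v) ! s \<and> (b#v) ! j = (a#u) ! s"
    unfolding sierp_adj_def by blast
  show "?vs \<and> (?inner \<or> ?bridge)"
  proof (cases s)
    case 0
    have "u ! j = b \<and> v ! j = a" if "j < t" for j
      using s(4)[of "Suc j"] that 0 by simp
    then have ?bridge
      using s(3) 0 len by (simp add: list_eq_iff_nth_eq)
    with vs show ?thesis by blast
  next
    case (Suc s')
    have "a = b" using s(2) Suc by force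
    moreover have "sierp_adj n t u v"
      unfolding sierp_adj_def
    proof (intro conjI exI[of _ s'])
      have "u ! j = v ! s' \<and> v ! j = u ! s'" if "s' < j" "j < t" for j
        using s(4)[of "Suc j"] that Suc by simp
      then show "\<forall>j. s' < j \<and> j < t \<longrightarrow> u ! j = v ! s' \<and> v ! j = u ! s'" by blast
      show "\<forall>j<s'. u ! j = v ! j"
        using s(2) Suc by force
    qed (use vs s Suc in simp_all)
    ultimately show ?thesis using vs by blast
  qed
next
  assume "?vs \<and> (?inner \<or> ?bridge)"
  then consider ?vs ?inner | ?vs ?bridge by blast
  then show ?adj
  proof cases
    case 1
    then obtain s where s: "s < t" "\<forall>j<s. u ! j = v ! j" "u ! s \<noteq> v ! s"
      "\<And>j. s < j \<Longrightarrow> j < t \<Longrightarrow> u ! j = v ! s \<and> v ! j = u ! s"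
      unfolding sierp_adj_def by blast
    show ?adj unfolding sierp_adj_def
    proof (intro conjI exI[of _ "Suc s"])
      show "\<forall>j<Suc s. (a # u) ! j = (b # v) ! j"
        using s(2) 1 by (auto simp: less_Suc_eq_0_disj)
      have "(a # u) ! j = (b # v) ! Suc s \<and> (b # v) ! j = (a # u) ! Suc s"
        if "Suc s < j" "j < Suc t" for j
        using s(4)[of "j - 1"] that by (cases j) auto
      then show "\<forall>j. Suc s < j \<and> j < Suc t \<longrightarrow>
          (a # u) ! j = (b # v) ! Suc s \<and> (b # v) ! j = (a # u) ! Suc s" by blast
    qed (use 1 s in simp_all)
  next
    case 2
    show ?adj unfolding sierp_adj_def
    proof (intro conjI exI[of _ 0])
      have "(a # u) ! j = (b # v) ! 0 \<and> (b # v) ! j = (a # u) ! 0" if "0 < j" "j < Suc t" for j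
        using 2 that by (cases j) auto
      then show "\<forall>j. 0 < j \<and> j < Suc t \<longrightarrow> (a # u) ! j = (b # v) ! 0 \<and> (b # v) ! j = (a # u) ! 0"
        by blast
    qed (use 2 in simp_all)
  qed
qed

lemma sierp_adj_bridge:
  "a \<in> {1..n} \<Longrightarrow> b \<in> {1..n} \<Longrightarrow> a \<noteq> b \<Longrightarrow>
    sierp_adj n (Suc t) (a # replicate t b) (b # replicate t a)"
  by (simp add: sierp_adj_Cons replicate_in_sierp_vertices)

lemma sierp_adj_Cons_same:
  "a \<in> {1..n} \<Longrightarrow> sierp_adj n t u v \<Longrightarrow> sierp_adj n (Suc t) (a # u) (a # v)"
  by (simp add: sierp_adj_Cons sierp_adj_in_vertices)

interpretation sierp: finite_graph "sierp_vertices n t" "sierp_adj n t" for n t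
  by unfold_locales (auto simp: finite_sierp_vertices sierp_adj_sym dest: sierp_adj_in_vertices)

lemma nbhd_sierp_Cons_subset:
  "nbhd (sierp_adj n (Suc t)) (a # u) \<subseteq>
     Cons a ` nbhd (sierp_adj n t) u \<union>
     (\<lambda>b. b # replicate t a) ` {b \<in> {1..n}. b \<noteq> a \<and> u = replicate t b}"
proof
  fix w assume "w \<in> nbhd (sierp_adj n (Suc t)) (a # u)"
  then have adj: "sierp_adj n (Suc t) (a # u) w" by (simp add: nbhd_def)
  then obtain b v where "w = b # v"
    using sierp_adj_in_vertices sierp_vertices_SucE by metis
  with adj show "w \<in> Cons a ` nbhd (sierp_adj n t) u \<union>
      (\<lambda>b. b # replicate t a) ` {b \<in> {1..n}. b \<noteq> a \<and> u = replicate t b}"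
    by (auto simp: sierp_adj_Cons nbhd_def)
qed

lemma card_nbhd_sierp_Cons_le:
  "card (nbhd (sierp_adj n (Suc t)) (a # u)) \<le>
     card (nbhd (sierp_adj n t) u) + card {b \<in> {1..n}. b \<noteq> a \<and> u = replicate t b}"
proof -
  have "card (nbhd (sierp_adj n (Suc t)) (a # u)) \<le> card (Cons a ` nbhd (sierp_adj n t) u \<union>
      (\<lambda>b. b # replicate t a) ` {b \<in> {1..n}. b \<noteq> a \<and> u = replicate t b})"
    by (rule card_mono[OF _ nbhd_sierp_Cons_subset]) simp
  also have "\<dots> \<le> card (Cons a ` nbhd (sierp_adj n t) u) +
      card ((\<lambda>b. b # replicate t a) ` {b \<in> {1..n}. b \<noteq> a \<and> u = replicate t b})"
    by (rule card_Un_le)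
  also have "\<dots> \<le> card (nbhd (sierp_adj n t) u) + card {b \<in> {1..n}. b \<noteq> a \<and> u = replicate t b}"
    by (intro add_mono card_image_le) auto
  finally show ?thesis .
qed

lemma card_nbhd_sierp_extreme:
  assumes "c \<in> {1..n}"
  shows "card (nbhd (sierp_adj n t) (replicate t c)) \<le> n - 1"
proof (induction t)
  case 0
  then show ?case by (simp add: nbhd_def sierp_adj_0)
next
  case (Suc t)
  let ?X = "{b \<in> {1..n}. b \<noteq> c \<and> replicate t c = replicate t b}"
  have "card (nbhd (sierp_adj n t) (replicate t c)) + card ?X \<le> n - 1"
  proof (cases "t = 0")
    case True
    have "card ?X \<le> card ({1..n} - {c})" by (intro card_mono) auto
    with True assms show ?thesis by (simp add: nbhd_def sierp_adj_0)
  next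
    case False
    then have "?X = {}" by auto
    with Suc.IH show ?thesis by (simp only: card.empty)
  qed
  then show ?case using card_nbhd_sierp_Cons_le[of n t c "replicate t c"] by simp
qed

lemma card_nbhd_sierp_le:
  assumes "u \<in> sierp_vertices n t"
  shows "card (nbhd (sierp_adj n t) u) \<le> n"
  using assms
proof (induction t arbitrary: u)
  case 0
  then show ?case by (simp add: nbhd_def sierp_adj_0)
next
  case (Suc t)
  then obtain a u' where u: "u = a # u'" and u': "u' \<in> sierp_vertices n t"
    by (blast elim: sierp_vertices_SucE)
  let ?X = "{b \<in> {1..n}. b \<noteq> a \<and> u' = replicate t b}"
  have "card (nbhd (sierp_adj n t) u') + card ?X \<le> n"
  proof (cases "t = 0")
    case True
    have "card ?X \<le> card {1..n}" by (intro card_mono) auto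
    with True show ?thesis by (simp add: nbhd_def sierp_adj_0)
  next
    case False
    show ?thesis
    proof (cases "?X = {}")
      case True
      then show ?thesis using Suc.IH[OF u'] by (simp only: card.empty)
    next
      case nonempty: False
      then obtain b where b: "b \<in> {1..n}" "u' = replicate t b" by blast
      then have "?X \<subseteq> {b}" using False by auto
      then have "card ?X \<le> 1" using card_mono[of "{b}" ?X] by simp
      moreover have "card (nbhd (sierp_adj n t) u') \<le> n - 1"
        using card_nbhd_sierp_extreme[OF b(1)] b(2) by simp
      ultimately show ?thesis using b(1) by (simp only: atLeastAtMost_iff) linarith
    qed
  qed
  then show ?case using card_nbhd_sierp_Cons_le[of n t a u'] u by simp
qed

lemma card_nbhd_sierp_ge:
  assumes "t \<ge> 1" and "u \<in> sierp_vertices n t"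
  shows "n - 1 \<le> card (nbhd (sierp_adj n t) u)"
  using assms
proof (induction t arbitrary: u)
  case 0
  then show ?case by simp
next
  case (Suc t)
  then obtain a u' where u: "u = a # u'" and a: "a \<in> {1..n}" and u': "u' \<in> sierp_vertices n t"
    by (blast elim: sierp_vertices_SucE)
  show ?case
  proof (cases "t = 0")
    case True
    then have "(\<lambda>b. [b]) ` ({1..n} - {a}) \<subseteq> nbhd (sierp_adj n (Suc t)) u"
      using a u' u by (auto simp: nbhd_def sierp_adj_Cons sierp_vertices_0)
    from card_mono[OF _ this] have "card ((\<lambda>b. [b]) ` ({1..n} - {a})) \<le> card (nbhd (sierp_adj n (Suc t)) u)"
      by simp
    moreover have "card ((\<lambda>b. [b]) ` ({1..n} - {a})) = n - 1"
      using a by (subst card_image) (auto simp: inj_on_def)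
    ultimately show ?thesis by simp
  next
    case False
    have "Cons a ` nbhd (sierp_adj n t) u' \<subseteq> nbhd (sierp_adj n (Suc t)) u"
      using a u by (auto simp: nbhd_def sierp_adj_Cons_same)
    from card_mono[OF _ this] Suc.IH[OF _ u'] False show ?thesis
      by (simp add: card_image)
  qed
qed

lemma sierp_bridge_partner:
  assumes "sierp_adj n (Suc t) (a # u) (b # v)" and "a \<noteq> b"
  shows "u = replicate t b \<and> v = replicate t a"
  using assms by (simp add: sierp_adj_Cons)

text \<open>For \<open>t \<ge> 1\<close> every vertex lies on at most one bridge, so a 4-cycle cannot use one: following
  the cycle from a bridge edge, both neighbouring edges stay inside a copy and the opposite edge
  would have to be the same bridge again.\<close>

lemma sierp_4cycle_same_head:
  assumes ux: "sierp_adj n (Suc t) (a # u) (c # x)" and xv: "sierp_adj n (Suc t) (c # x) (b # v)"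
    and vy: "sierp_adj n (Suc t) (b # v) (d # y)" and yu: "sierp_adj n (Suc t) (d # y) (a # u)"
    and uv: "a # u \<noteq> b # v" and xy: "c # x \<noteq> d # y" and t: "t \<ge> 1"
  shows "a = c"
proof (rule ccontr)
  assume ac: "a \<noteq> c"
  then have u: "u = replicate t c" and x: "x = replicate t a"
    using sierp_bridge_partner[OF ux] by auto
  have cb: "c = b"
  proof (rule ccontr)
    assume "c \<noteq> b"
    then have "x = replicate t b" "v = replicate t c" using sierp_bridge_partner[OF xv] by auto
    with u x uv t show False by simp
  qed
  have da: "d = a"
  proof (rule ccontr)
    assume "d \<noteq> a"
    then have "y = replicate t a" "u = replicate t d" using sierp_bridge_partner[OF yu] by auto
    with u x xy t show False by simp
  qed
  have "v = replicate t a" using sierp_bridge_partner[OF vy] ac cb da by auto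
  with xv cb x show False by (simp add: sierp_adj_irrefl)
qed

lemma sierp_4cycle_chord:
  assumes "sierp_adj n t u x" "sierp_adj n t x v" "sierp_adj n t v y" "sierp_adj n t y u"
    and "u \<noteq> v" and "x \<noteq> y"
  shows "sierp_adj n t u v"
  using assms
proof (induction t arbitrary: u x v y)
  case 0
  then show ?case by (simp add: sierp_adj_0)
next
  case (Suc t)
  obtain a u' c x' b v' d y' where cons: "u = a # u'" "x = c # x'" "v = b # v'" "y = d # y'"
    using Suc.prems(1-3) by (metis sierp_adj_in_vertices sierp_vertices_SucE)
  note adj = Suc.prems(1-4)[unfolded cons]
  show ?case
  proof (cases "t = 0")
    case True
    with adj Suc.prems(5) show ?thesis
      unfolding cons by (auto simp: sierp_adj_Cons sierp_vertices_0)
  next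
    case False
    then have t: "t \<ge> 1" by simp
    have neq: "a # u' \<noteq> b # v'" "c # x' \<noteq> d # y'" using Suc.prems(5,6) cons by auto
    have "a = c" by (rule sierp_4cycle_same_head[OF adj neq t])
    moreover have "c = b" by (rule sierp_4cycle_same_head[OF adj(2-4,1) neq(2) neq(1)[symmetric] t])
    moreover have "b = d" by (rule sierp_4cycle_same_head[OF adj(3,4,1,2) neq(1)[symmetric] neq(2)[symmetric] t])
    ultimately have "sierp_adj n t u' x'" "sierp_adj n t x' v'" "sierp_adj n t v' y'" "sierp_adj n t y' u'"
      using adj by (simp_all add: sierp_adj_Cons)
    moreover have "u' \<noteq> v'" "x' \<noteq> y'" using neq \<open>a = c\<close> \<open>c = b\<close> \<open>b = d\<close> by auto
    ultimately have "sierp_adj n t u' v'" by (rule Suc.IH)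
    with adj(1) \<open>a = c\<close> \<open>c = b\<close> show ?thesis
      unfolding cons by (simp add: sierp_adj_Cons sierp_adj_in_vertices)
  qed
qed

lemma sierp_closed_set_contains_extreme:
  assumes "H \<subseteq> sierp_vertices n t" and "\<And>x y. x \<in> H \<Longrightarrow> sierp_adj n t x y \<Longrightarrow> y \<in> H"
    and "H \<noteq> {}" and "c \<in> {1..n}"
  shows "replicate t c \<in> H"
  using assms
proof (induction t arbitrary: H c)
  case 0
  then show ?case by (auto simp: sierp_vertices_0)
next
  case (Suc t)
  define H' where "H' p = {w. p # w \<in> H}" for p
  have copy: "p # replicate t c' \<in> H" if "H' p \<noteq> {}" "c' \<in> {1..n}" for p c'
  proof -
    have "H' p \<subseteq> sierp_vertices n t" using Suc.prems(1) by (auto simp: H'_def)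
    moreover have "y \<in> H' p" if "x \<in> H' p" "sierp_adj n t x y" for x y
    proof -
      have "p \<in> {1..n}" using \<open>x \<in> H' p\<close> Suc.prems(1) by (auto simp: H'_def)
      with that show ?thesis using Suc.prems(2) by (auto simp: H'_def sierp_adj_Cons_same)
    qed
    ultimately have "replicate t c' \<in> H' p"
      using \<open>H' p \<noteq> {}\<close> \<open>c' \<in> {1..n}\<close> by (rule Suc.IH)
    then show ?thesis by (simp add: H'_def)
  qed
  obtain w where "w \<in> H" using Suc.prems(3) by blast
  then obtain a u where w: "w = a # u" and a: "a \<in> {1..n}"
    using Suc.prems(1) by (blast elim: sierp_vertices_SucE)
  have "H' a \<noteq> {}" using \<open>w \<in> H\<close> w by (auto simp: H'_def)
  then have ac: "a # replicate t c \<in> H" using copy Suc.prems(4) by blast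
  show ?case
  proof (cases "c = a")
    case True
    with ac show ?thesis by simp
  next
    case False
    then have "c # replicate t a \<in> H"
      using Suc.prems(2)[OF ac] sierp_adj_bridge[OF a Suc.prems(4)] by blast
    then have "H' c \<noteq> {}" by (auto simp: H'_def)
    then show ?thesis using copy Suc.prems(4) by simp
  qed
qed

section \<open>The upper bound\<close>

lemma dominated_by_sierp_Cons:
  assumes "a \<in> {1..n}" and "dominated_by (sierp_adj n t) C w"
  shows "dominated_by (sierp_adj n (Suc t)) (Cons a ` C) (a # w)"
  using assms sierp_adj_Cons_same[OF assms(1)] unfolding dominated_by_def by blast

text \<open>\<open>sierp_code n True t i\<close> dominates all of \<open>S(K\<^sub>n,t)\<close>, and \<open>sierp_code n False t i\<close> all
  vertices except \<open>i\<^sup>t\<close> (\<open>t\<close> even) resp.\ except the extreme vertices (\<open>t\<close> odd). In the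
  recursion, a vertex of a copy missed by the code placed there is the endpoint of a bridge
  whose other endpoint is an extreme vertex of a neighbouring copy lying in the code placed there.\<close>

fun sierp_code :: "nat \<Rightarrow> bool \<Rightarrow> nat \<Rightarrow> nat \<Rightarrow> nat list set" where
  "sierp_code n True 0 i = {[]}"
| "sierp_code n False 0 i = {}"
| "sierp_code n True (Suc t) i =
     (if odd t then (\<Union>j\<in>{1..n}. Cons j ` sierp_code n True t j)
      else Cons i ` sierp_code n True t i \<union> (\<Union>j\<in>{1..n}-{i}. Cons j ` sierp_code n False t i))"
| "sierp_code n False (Suc t) i =
     (if odd t then Cons i ` sierp_code n False t i \<union> (\<Union>j\<in>{1..n}-{i}. Cons j ` sierp_code n True t i)
      else (\<Union>j\<in>{1..n}. Cons j ` sierp_code n False t j))"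

lemma sierp_code_subset: "i \<in> {1..n} \<Longrightarrow> sierp_code n b t i \<subseteq> sierp_vertices n t"
proof (induction t arbitrary: i b)
  case 0
  then show ?case by (cases b) (auto simp: sierp_vertices_0)
next
  case (Suc t)
  have "x \<in> sierp_vertices n t" if "j \<in> {1..n}" "x \<in> sierp_code n b' t j" for j b' x
    using Suc.IH that by blast
  with Suc.prems show ?case by (cases b) auto
qed

lemma extreme_in_sierp_code:
  "i \<in> {1..n} \<Longrightarrow> j \<in> {1..n} \<Longrightarrow> (odd t \<Longrightarrow> j = i) \<Longrightarrow>
    replicate t j \<in> sierp_code n True t i"
proof (induction t arbitrary: i j)
  case (Suc t)
  show ?case
  proof (cases "odd t")
    case True
    with Suc.IH[of j j] Suc.prems(2) show ?thesis by auto
  next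
    case False
    with Suc.prems(3) have "j = i" by simp
    with Suc.IH[of i j] Suc.prems(1) False show ?thesis by auto
  qed
qed simp

lemma sierp_code_True_Suc_dominates:
  assumes i: "i \<in> {1..n}" and v: "v \<in> sierp_vertices n (Suc t)"
    and IH_True: "\<And>j w. j \<in> {1..n} \<Longrightarrow> w \<in> sierp_vertices n t \<Longrightarrow>
        dominated_by (sierp_adj n t) (sierp_code n True t j) w"
    and IH_False: "\<And>w. w \<in> sierp_vertices n t \<Longrightarrow>
        w \<notin> (if even t then {replicate t i} else range (\<lambda>j. replicate t j)) \<Longrightarrow>
        dominated_by (sierp_adj n t) (sierp_code n False t i) w"
  shows "dominated_by (sierp_adj n (Suc t)) (sierp_code n True (Suc t) i) v"
proof -
  obtain j w where v: "v = j # w" and j: "j \<in> {1..n}" and w: "w \<in> sierp_vertices n t"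
    using v by (blast elim: sierp_vertices_SucE)
  show ?thesis
  proof (cases "odd t \<or> j = i")
    case True
    have "dominated_by (sierp_adj n (Suc t)) (Cons j ` sierp_code n True t j) v"
      unfolding v by (rule dominated_by_sierp_Cons[OF j IH_True[OF j w]])
    then show ?thesis by (rule dominated_by_mono) (use True j in auto)
  next
    case False
    then have t: "even t" and ji: "j \<noteq> i" by auto
    show ?thesis
    proof (cases "w = replicate t i")
      case True
      have "i # replicate t j \<in> sierp_code n True (Suc t) i"
        using extreme_in_sierp_code[OF i j, of t] t by simp
      moreover have "sierp_adj n (Suc t) v (i # replicate t j)"
        unfolding v True using sierp_adj_bridge[OF j i ji] .
      ultimately show ?thesis by (rule dominated_by_adj)
    next
      case False
      have "dominated_by (sierp_adj n (Suc t)) (Cons j ` sierp_code n False t i) v"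
        unfolding v using dominated_by_sierp_Cons[OF j IH_False[OF w]] t False by simp
      then show ?thesis by (rule dominated_by_mono) (use t ji j in auto)
    qed
  qed
qed

lemma sierp_code_False_Suc_dominates:
  assumes i: "i \<in> {1..n}" and v: "v \<in> sierp_vertices n (Suc t)"
    and gap: "v \<notin> (if even (Suc t) then {replicate (Suc t) i} else range (\<lambda>j. replicate (Suc t) j))"
    and IH_True: "\<And>w. w \<in> sierp_vertices n t \<Longrightarrow>
        dominated_by (sierp_adj n t) (sierp_code n True t i) w"
    and IH_False: "\<And>j w. j \<in> {1..n} \<Longrightarrow> w \<in> sierp_vertices n t \<Longrightarrow>
        w \<notin> (if even t then {replicate t j} else range (\<lambda>j. replicate t j)) \<Longrightarrow>
        dominated_by (sierp_adj n t) (sierp_code n False t j) w"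
  shows "dominated_by (sierp_adj n (Suc t)) (sierp_code n False (Suc t) i) v"
proof -
  obtain j w where v: "v = j # w" and j: "j \<in> {1..n}" and w: "w \<in> sierp_vertices n t"
    using v by (blast elim: sierp_vertices_SucE)
  show ?thesis
  proof (cases "odd t")
    case t: True
    show ?thesis
    proof (cases "j = i")
      case False
      have "dominated_by (sierp_adj n (Suc t)) (Cons j ` sierp_code n True t i) v"
        unfolding v by (rule dominated_by_sierp_Cons[OF j IH_True[OF w]])
      then show ?thesis by (rule dominated_by_mono) (use t False j in auto)
    next
      case ji: True
      show ?thesis
      proof (cases "w \<in> range (\<lambda>j. replicate t j)")
        case True
        then obtain l where l: "w = replicate t l" by blast
        have "t \<ge> 1" using t by (cases t) auto
        then have "l \<in> {1..n}" using w l by (cases t) (auto simp: sierp_vertices_def)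
        moreover have "l \<noteq> i" using gap t ji l v by auto
        ultimately have "l # replicate t i \<in> sierp_code n False (Suc t) i"
          using extreme_in_sierp_code[OF i i, of t] t by auto
        moreover have "sierp_adj n (Suc t) v (l # replicate t i)"
          unfolding v ji l using sierp_adj_bridge[OF i \<open>l \<in> {1..n}\<close>] \<open>l \<noteq> i\<close> by simp
        ultimately show ?thesis by (rule dominated_by_adj)
      next
        case False
        have "dominated_by (sierp_adj n (Suc t)) (Cons i ` sierp_code n False t i) v"
          unfolding v ji using dominated_by_sierp_Cons[OF i IH_False[OF i w]] t False by simp
        then show ?thesis by (rule dominated_by_mono) (use t in auto)
      qed
    qed
  next
    case t: False
    have "w \<noteq> replicate t j" using gap t v by auto
    have "dominated_by (sierp_adj n (Suc t)) (Cons j ` sierp_code n False t j) v"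
      unfolding v using dominated_by_sierp_Cons[OF j IH_False[OF j w]] \<open>w \<noteq> replicate t j\<close> t
      by simp
    then show ?thesis by (rule dominated_by_mono) (use t j in auto)
  qed
qed

lemma sierp_code_dominates:
  assumes "i \<in> {1..n}" and "v \<in> sierp_vertices n t"
  shows "dominated_by (sierp_adj n t) (sierp_code n True t i) v \<and>
    (v \<notin> (if even t then {replicate t i} else range (\<lambda>j. replicate t j)) \<longrightarrow>
      dominated_by (sierp_adj n t) (sierp_code n False t i) v)"
  using assms
proof (induction t arbitrary: i v)
  case 0
  then show ?case by (simp add: dominated_by_def sierp_vertices_0)
next
  case (Suc t)
  have IH_True: "dominated_by (sierp_adj n t) (sierp_code n True t j) w"
    if "j \<in> {1..n}" "w \<in> sierp_vertices n t" for j w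
    using Suc.IH[OF that] by blast
  have IH_False: "dominated_by (sierp_adj n t) (sierp_code n False t j) w"
    if "j \<in> {1..n}" "w \<in> sierp_vertices n t"
      "w \<notin> (if even t then {replicate t j} else range (\<lambda>j. replicate t j))" for j w
    using Suc.IH[OF that(1,2)] that(3) by blast
  show ?case
    using sierp_code_True_Suc_dominates[OF Suc.prems IH_True IH_False[OF Suc.prems(1)]]
      sierp_code_False_Suc_dominates[OF Suc.prems _ IH_True[OF Suc.prems(1)] IH_False]
    by blast
qed

lemma card_UN_Cons_le:
  assumes "finite I" and "\<And>j. j \<in> I \<Longrightarrow> int m * int (card (S j)) \<le> K"
  shows "int m * int (card (\<Union>j\<in>I. Cons j ` S j)) \<le> int (card I) * K"
proof -
  have "card (\<Union>j\<in>I. Cons j ` S j) \<le> (\<Sum>j\<in>I. card (Cons j ` S j))"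
    using assms(1) by (rule card_UN_le)
  also have "\<dots> = (\<Sum>j\<in>I. card (S j))" by (simp add: card_image)
  finally have "int m * int (card (\<Union>j\<in>I. Cons j ` S j)) \<le> int m * int (\<Sum>j\<in>I. card (S j))"
    by (intro mult_left_mono of_nat_mono) simp_all
  also have "\<dots> = (\<Sum>j\<in>I. int m * int (card (S j)))"
    by (simp add: sum_distrib_left)
  also have "\<dots> \<le> int (card I) * K"
    using sum_mono[of I _ "\<lambda>_. K", OF assms(2)] by simp
  finally show ?thesis .
qed

lemma card_Cons_Un_UN_le:
  assumes "i \<in> {1..n}" and "int m * int (card A) \<le> K" and "int m * int (card B) \<le> L"
  shows "int m * int (card (Cons i ` A \<union> (\<Union>j\<in>{1..n}-{i}. Cons j ` B))) \<le> K + int (n - 1) * L"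
proof -
  have "card (Cons i ` A \<union> (\<Union>j\<in>{1..n}-{i}. Cons j ` B))
      \<le> card (Cons i ` A) + card (\<Union>j\<in>{1..n}-{i}. Cons j ` B)"
    by (rule card_Un_le)
  then have "int m * int (card (Cons i ` A \<union> (\<Union>j\<in>{1..n}-{i}. Cons j ` B)))
      \<le> int m * int (card A) + int m * int (card (\<Union>j\<in>{1..n}-{i}. Cons j ` B))"
    by (simp add: card_image flip: distrib_left) (simp add: mult_left_mono flip: of_nat_add)
  also have "\<dots> \<le> K + int (n - 1) * L"
    using assms card_UN_Cons_le[of "{1..n}-{i}" m "\<lambda>_. B" L] by (intro add_mono) auto
  finally show ?thesis .
qed

lemma card_sierp_code:
  assumes "i \<in> {1..n}"
  shows "int (n + 1) * int (card (sierp_code n True t i)) \<le> int n ^ t + (if even t then int n else 1) \<and>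
    int (n + 1) * int (card (sierp_code n False t i)) \<le> int n ^ t - (if even t then 1 else int n)"
  using assms
proof (induction t arbitrary: i)
  case 0
  then show ?case by simp
next
  case (Suc t)
  have n: "int (n - 1) = int n - 1" using Suc.prems by auto
  have IH_True: "\<And>j. j \<in> {1..n} \<Longrightarrow>
      int (n + 1) * int (card (sierp_code n True t j)) \<le> int n ^ t + (if even t then int n else 1)"
    and IH_False: "\<And>j. j \<in> {1..n} \<Longrightarrow>
      int (n + 1) * int (card (sierp_code n False t j)) \<le> int n ^ t - (if even t then 1 else int n)"
    using Suc.IH by blast+
  show ?case
  proof (cases "odd t")
    case True
    show ?thesis
      using card_UN_Cons_le[of "{1..n}" "n + 1" "sierp_code n True t" "int n ^ t + 1"]
        card_Cons_Un_UN_le[OF Suc.prems IH_False[OF Suc.prems] IH_True[OF Suc.prems]]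
        IH_True True n by (auto simp: algebra_simps)
  next
    case False
    show ?thesis
      using card_UN_Cons_le[of "{1..n}" "n + 1" "sierp_code n False t" "int n ^ t - 1"]
        card_Cons_Un_UN_le[OF Suc.prems IH_True[OF Suc.prems] IH_False[OF Suc.prems]]
        IH_False False n by (auto simp: algebra_simps)
  qed
qed

lemma drdf_weight_le_sierp:
  assumes "n \<ge> 1"
  obtains f where "is_drdf (sierp_vertices n t) (sierp_adj n t) f"
    and "drdf_weight (sierp_vertices n t) f \<le> 3 * (n ^ t div (n + 1)) + (if odd t then 3 else 2)"
proof -
  define q where "q = n ^ t div (n + 1)"
  have "n ^ t = q * (n + 1) + (if even t then 1 else n)"
    using power_mod_Suc_self[OF assms, of t] div_mult_mod_eq[of "n ^ t" "n + 1"] by (simp add: q_def)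
  then have "int (n ^ t) = int (q * (n + 1) + (if even t then 1 else n))" by (rule arg_cong)
  then have nt: "int n ^ t = int q * (int n + 1) + (if even t then 1 else int n)"
    by (cases "even t") (simp_all add: algebra_simps)
  define C where "C = sierp_code n (odd t) t 1"
  define X where "X = (if odd t then {} else {replicate t (1::nat)})"
  define f where "f = (\<lambda>v. if v \<in> C then 3 else if v \<in> X then 2 else (0::nat))"
  have one: "1 \<in> {1..n}" using assms by simp
  have C: "C \<subseteq> sierp_vertices n t" unfolding C_def using sierp_code_subset[OF one] .
  have "dominated_by (sierp_adj n t) C v" if "v \<in> sierp_vertices n t" "v \<notin> X" for v
  proof (cases "odd t")
    case True
    then show ?thesis using sierp_code_dominates[OF one that(1)] by (simp add: C_def)
  next
    case False
    then show ?thesis using sierp_code_dominates[OF one that(1)] that(2) by (simp add: C_def X_def)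
  qed
  then have f: "is_drdf (sierp_vertices n t) (sierp_adj n t) f"
    unfolding f_def by (rule is_drdf_dominating_set[OF C])
  have weight: "drdf_weight (sierp_vertices n t) f \<le> 3 * card C + 2 * card X"
    unfolding f_def by (rule drdf_weight_dominating_set[OF finite_sierp_vertices C]) (simp add: X_def)
  have "int (n + 1) * int (card C) \<le> int (n + 1) * int (if odd t then q + 1 else q)"
    using card_sierp_code[OF one, of t] nt by (cases "odd t") (auto simp: C_def algebra_simps)
  then have "card C \<le> (if odd t then q + 1 else q)" by (simp only: mult_le_cancel_left) simp
  with weight have "drdf_weight (sierp_vertices n t) f \<le> 3 * q + (if odd t then 3 else 2)"
    by (simp add: X_def split: if_splits)
  with f show ?thesis using that by (simp add: q_def)
qed

section \<open>The lower bound\<close>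

locale sierp_drdf = drdf_without_ones "sierp_vertices n t" "sierp_adj n t" g for n t :: nat and g +
  assumes n_ge_2: "n \<ge> 2" and t_ge_1: "t \<ge> 1"
begin

lemma weight_bound:
  "6 * n ^ t + (n - 2) * card twos \<le> 2 * (n + 1) * (3 * card threes + 2 * card twos)"
  and weight_bound_tight:
  "6 * n ^ t + (n - 2) * card twos = 2 * (n + 1) * (3 * card threes + 2 * card twos) \<Longrightarrow>
    (\<forall>u\<in>sierp_vertices n t. charge u = 2) \<and> (\<forall>v\<in>twos. card (nbhd (sierp_adj n t) v) = n)"
proof -
  define S where "S = 2 * (n + 1) * card threes + (n + 2) * card twos"
  have identity: "2 * (n + 1) * (3 * card threes + 2 * card twos) = 3 * S + (n - 2) * card twos"
  proof -
    obtain m where "n = m + 2" using n_ge_2 by (metis add.commute le_add_diff_inverse)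
    then show ?thesis by (simp add: S_def algebra_simps)
  qed
  have bound: "2 * n ^ t \<le> S"
      "2 * n ^ t = S \<Longrightarrow>
        (\<forall>u\<in>sierp_vertices n t. charge u = 2) \<and> (\<forall>v\<in>twos. card (nbhd (sierp_adj n t) v) = n)"
    using charge_bound[of n] card_nbhd_sierp_le by (simp_all add: card_sierp_vertices S_def)
  show "6 * n ^ t + (n - 2) * card twos \<le> 2 * (n + 1) * (3 * card threes + 2 * card twos)"
    using bound(1) unfolding identity by linarith
  assume "6 * n ^ t + (n - 2) * card twos = 2 * (n + 1) * (3 * card threes + 2 * card twos)"
  then have "2 * n ^ t = S" unfolding identity by linarith
  then show "(\<forall>u\<in>sierp_vertices n t. charge u = 2) \<and> (\<forall>v\<in>twos. card (nbhd (sierp_adj n t) v) = n)"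
    by (rule bound(2))
qed

text \<open>A vertex \<open>y\<close> of charge 2 next to a 2 sees exactly two 2s. For a 2-vertex \<open>b\<^sub>1\<close> of charge 2
  (so without labelled neighbours) and \<open>twos = {b\<^sub>1, b\<^sub>2}\<close>, every neighbour of \<open>b\<^sub>1\<close> is
  therefore adjacent to \<open>b\<^sub>2\<close>; two such neighbours close a 4-cycle through \<open>b\<^sub>1\<close> and \<open>b\<^sub>2\<close>.\<close>

lemma card_twos_ne_2_if_all_charges_2:
  assumes n: "n \<ge> 3" and charges: "\<forall>u\<in>sierp_vertices n t. charge u = 2"
  shows "card twos \<noteq> 2"
proof
  assume card_twos: "card twos = 2"
  then obtain b\<^sub>1 b\<^sub>2 where twos: "twos = {b\<^sub>1, b\<^sub>2}" and "b\<^sub>1 \<noteq> b\<^sub>2"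
    by (auto simp: card_2_iff)
  then have b: "b\<^sub>1 \<in> sierp_vertices n t" "b\<^sub>1 \<in> twos" using twos_subset by auto
  moreover have "charge b\<^sub>1 = 2" using charges b(1) by blast
  ultimately have no_twos: "nbhd (sierp_adj n t) b\<^sub>1 \<inter> twos = {}" by (simp add: charge_def)
  have to_b\<^sub>2: "sierp_adj n t y b\<^sub>2" if y: "y \<in> nbhd (sierp_adj n t) b\<^sub>1" for y
  proof -
    have "y \<in> sierp_vertices n t" "y \<notin> twos" "sierp_adj n t y b\<^sub>1"
      using y no_twos nbhd_subset by (auto simp: nbhd_def sierp_adj_sym)
    with b charges have "card (nbhd (sierp_adj n t) y \<inter> twos) = 2"
      using charge_eq_2_near_two by blast
    then have "nbhd (sierp_adj n t) y \<inter> twos = twos"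
      using card_twos by (intro card_subset_eq) auto
    then show ?thesis using twos by (auto simp: nbhd_def)
  qed
  have "\<not> card (nbhd (sierp_adj n t) b\<^sub>1) \<le> Suc 0"
    using card_nbhd_sierp_ge[OF t_ge_1 b(1)] n by simp
  then obtain y\<^sub>1 y\<^sub>2 where
    y: "y\<^sub>1 \<in> nbhd (sierp_adj n t) b\<^sub>1" "y\<^sub>2 \<in> nbhd (sierp_adj n t) b\<^sub>1" "y\<^sub>1 \<noteq> y\<^sub>2"
    using card_le_Suc0_iff_eq[OF finite_nbhd] by blast
  have "sierp_adj n t b\<^sub>1 b\<^sub>2"
  proof (rule sierp_4cycle_chord)
    show "sierp_adj n t b\<^sub>1 y\<^sub>1" "sierp_adj n t y\<^sub>2 b\<^sub>1"
      using y by (auto simp: nbhd_def sierp_adj_sym)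
    show "sierp_adj n t y\<^sub>1 b\<^sub>2" "sierp_adj n t b\<^sub>2 y\<^sub>2"
      using to_b\<^sub>2 y by (auto simp: sierp_adj_sym)
  qed fact+
  then have "b\<^sub>2 \<in> nbhd (sierp_adj n t) b\<^sub>1 \<inter> twos" using twos by (simp add: nbhd_def)
  with no_twos show False by simp
qed

text \<open>For \<open>n = 2\<close>, the 2s together with their neighbours form a set closed under adjacency: a
  neighbour of a 2 has charge 2, hence exactly two 2s among its at most two neighbours. It
  contains an extreme vertex, which has only one neighbour; impossible.\<close>

lemma twos_empty_if_all_charges_2_n2:
  assumes n: "n = 2" and charges: "\<forall>u\<in>sierp_vertices n t. charge u = 2"
    and deg_twos: "\<forall>v\<in>twos. card (nbhd (sierp_adj n t) v) = 2"
  shows "twos = {}"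
proof (rule ccontr)
  assume "twos \<noteq> {}"
  define H where "H = twos \<union> {u \<in> sierp_vertices n t. \<exists>v\<in>twos. sierp_adj n t u v}"
  have sub: "H \<subseteq> sierp_vertices n t" using twos_subset by (auto simp: H_def)
  have deg_le: "card (nbhd (sierp_adj n t) u) \<le> 2" if "u \<in> sierp_vertices n t" for u
    using card_nbhd_sierp_le[OF that] n by simp
  have near_two: "u \<notin> twos \<Longrightarrow> v \<in> twos \<Longrightarrow> sierp_adj n t u v \<Longrightarrow>
      u \<in> sierp_vertices n t \<Longrightarrow> nbhd (sierp_adj n t) u \<inter> twos = nbhd (sierp_adj n t) u" for u v
    using charge_eq_2_near_two charges deg_le
    by (metis card_mono card_subset_eq finite_nbhd inf_le1 order_antisym)
  have closed: "y \<in> H" if "x \<in> H" "sierp_adj n t x y" for x y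
  proof (cases "x \<in> twos")
    case True
    with that show ?thesis by (auto simp: H_def dest: sierp_adj_sym sierp_adj_in_vertices)
  next
    case False
    with that near_two have "y \<in> twos" by (auto simp: H_def nbhd_def)
    then show ?thesis by (simp add: H_def)
  qed
  have "H \<noteq> {}" using \<open>twos \<noteq> {}\<close> by (simp add: H_def)
  have "1 \<in> {1..n}" using n by simp
  with sub closed \<open>H \<noteq> {}\<close> have e: "replicate t 1 \<in> H"
    by (rule sierp_closed_set_contains_extreme)
  have e_deg: "card (nbhd (sierp_adj n t) (replicate t 1)) \<le> 1"
    using card_nbhd_sierp_extreme[OF \<open>1 \<in> {1..n}\<close>] n by simp
  show False
  proof (cases "replicate t 1 \<in> twos")
    case True
    with deg_twos e_deg show False by auto
  next
    case False
    with e obtain v where "v \<in> twos" "sierp_adj n t (replicate t 1) v" by (auto simp: H_def)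
    with False have "card (nbhd (sierp_adj n t) (replicate t 1) \<inter> twos) = 2"
      using charge_eq_2_near_two charges replicate_in_sierp_vertices[OF \<open>1 \<in> {1..n}\<close>] by blast
    moreover have "card (nbhd (sierp_adj n t) (replicate t 1) \<inter> twos) \<le> card (nbhd (sierp_adj n t) (replicate t 1))"
      by (intro card_mono) auto
    ultimately show False using e_deg by simp
  qed
qed

lemma weight_ge_n2:
  assumes n: "n = 2"
  shows "n ^ t + 1 \<le> 3 * card threes + 2 * card twos"
proof (rule ccontr)
  define w where "w = 3 * card threes + 2 * card twos"
  have coeffs: "n - 2 = 0" "2 * (n + 1) = 6" using n by simp_all
  assume "\<not> ?thesis"
  then have "w \<le> n ^ t" by (simp add: w_def)
  moreover have "6 * n ^ t \<le> 6 * w"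
    using weight_bound unfolding coeffs w_def by simp
  ultimately have w: "w = n ^ t" by linarith
  then have "6 * n ^ t + (n - 2) * card twos = 2 * (n + 1) * (3 * card threes + 2 * card twos)"
    unfolding coeffs w_def by simp
  with n have "twos = {}"
    using weight_bound_tight twos_empty_if_all_charges_2_n2 by blast
  with w have "n ^ t = 3 * card threes" by (simp add: w_def)
  moreover have "n ^ t mod 3 \<noteq> 0"
    using power_mod_Suc_self[of n t] n by (simp split: if_splits)
  ultimately show False by simp
qed

lemma weight_ge_odd:
  assumes n: "n \<ge> 3" and t: "odd t"
  shows "3 * (n ^ t div (n + 1)) + 3 \<le> 3 * card threes + 2 * card twos"
proof (rule ccontr)
  define q where "q = n ^ t div (n + 1)"
  have nt: "n ^ t = q * (n + 1) + n"
    using power_mod_Suc_self[of n t] n t div_mult_mod_eq[of "n ^ t" "n + 1"] by (simp add: q_def)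
  assume "\<not> ?thesis"
  then have "3 * card threes + 2 * card twos \<le> 3 * q + 2" by (simp add: q_def)
  then have "2 * (n + 1) * (3 * card threes + 2 * card twos) \<le> 2 * (n + 1) * (3 * q + 2)"
    by (rule mult_le_mono2)
  with weight_bound have "6 * n ^ t \<le> 2 * (n + 1) * (3 * q + 2)" by linarith
  with nt have "6 * n \<le> 4 * (n + 1)" by (simp add: algebra_simps)
  with n show False by simp
qed

text \<open>For even \<open>t\<close> the counting bound alone allows one more unit of weight than claimed; the
  extremal configuration has exactly two 2s and all charges 2, which the 4-cycle argument excludes.\<close>

lemma weight_ge_even:
  assumes n: "n \<ge> 3" and t: "even t"
  shows "3 * (n ^ t div (n + 1)) + 2 \<le> 3 * card threes + 2 * card twos"
proof (rule ccontr)
  define q where "q = n ^ t div (n + 1)"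
  define w where "w = 3 * card threes + 2 * card twos"
  have nt: "n ^ t = q * (n + 1) + 1"
    using power_mod_Suc_self[of n t] n t div_mult_mod_eq[of "n ^ t" "n + 1"] by (simp add: q_def)
  have bound: "6 * (q * (n + 1)) + 6 + (n - 2) * card twos \<le> 2 * (n + 1) * w"
    using weight_bound unfolding nt w_def by (simp add: algebra_simps)
  assume "\<not> ?thesis"
  then have "w \<le> 3 * q + 1" by (simp add: q_def w_def)
  then have upper: "2 * (n + 1) * w \<le> 6 * (q * (n + 1)) + 2 * (n + 1)"
    using mult_le_mono2[of w "3 * q + 1" "2 * (n + 1)"] by (simp add: algebra_simps)
  have "w = 3 * q + 1"
  proof (rule ccontr)
    assume "w \<noteq> 3 * q + 1"
    with \<open>w \<le> 3 * q + 1\<close> have "2 * (n + 1) * w \<le> 2 * (n + 1) * (3 * q)"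
      by (intro mult_le_mono2) simp
    then have "2 * (n + 1) * w \<le> 6 * (q * (n + 1))" by (simp add: algebra_simps)
    with bound show False by linarith
  qed
  define d where "d = n - 2"
  have "d * 2 + 6 = 2 * (n + 1)" using n by (simp add: d_def)
  with bound upper have "d * card twos \<le> d * 2" unfolding d_def[symmetric] by linarith
  then have "card twos \<le> 2" using n by (simp add: d_def)
  with \<open>w = 3 * q + 1\<close> have twos: "card twos = 2" unfolding w_def by presburger
  with \<open>w = 3 * q + 1\<close> bound upper n
  have "6 * n ^ t + (n - 2) * card twos = 2 * (n + 1) * (3 * card threes + 2 * card twos)"
    by (simp add: nt w_def algebra_simps)
  with weight_bound_tight card_twos_ne_2_if_all_charges_2[OF n] twos show False by blast
qed

lemma weight_ge: "3 * (n ^ t div (n + 1)) + (if odd t then 3 else 2) \<le> 3 * card threes + 2 * card twos"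
proof (cases "n = 2")
  case True
  then have "n ^ t = 3 * (n ^ t div (n + 1)) + (if odd t then 2 else 1)"
    using power_mod_Suc_self[of n t] div_mult_mod_eq[of "n ^ t" "n + 1"] by (cases "even t") simp_all
  with weight_ge_n2[OF True] show ?thesis by (cases "odd t") simp_all
next
  case False
  with n_ge_2 weight_ge_odd weight_ge_even show ?thesis by simp
qed

end

lemma drdf_weight_ge_sierp:
  assumes "n \<ge> 2" and "t \<ge> 1" and f: "is_drdf (sierp_vertices n t) (sierp_adj n t) f"
  shows "3 * (n ^ t div (n + 1)) + (if odd t then 3 else 2) \<le> drdf_weight (sierp_vertices n t) f"
proof -
  define g where "g = (\<lambda>v. if f v = 1 then 0 else f v)"
  interpret sierp_drdf n t g
  proof (rule sierp_drdf.intro)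
    show "drdf_without_ones (sierp_vertices n t) (sierp_adj n t) g"
      using sierp.finite_graph_axioms is_drdf_drop_ones[OF f]
      by (auto simp: drdf_without_ones_def drdf_without_ones_axioms_def g_def)
  qed (unfold_locales; fact assms)
  have "drdf_weight (sierp_vertices n t) g \<le> drdf_weight (sierp_vertices n t) f"
    unfolding drdf_weight_def g_def by (intro sum_mono) simp
  with weight_ge drdf_weight_eq show ?thesis by simp
qed

theorem theorem3p3:
  fixes n t :: nat
  assumes "n \<ge> 2" and "t \<ge> 1"
  shows "int (gamma_dR (sierp_vertices n t) (sierp_adj n t)) =
           (if odd t then 3 * \<lceil>real (n ^ t) / real (n + 1)\<rceil>
            else 3 * \<lceil>real (n ^ t) / real (n + 1)\<rceil> - 1)"
proof -
  define q where "q = n ^ t div (n + 1)"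
  obtain f where "is_drdf (sierp_vertices n t) (sierp_adj n t) f"
    and "drdf_weight (sierp_vertices n t) f \<le> 3 * q + (if odd t then 3 else 2)"
    using drdf_weight_le_sierp[of n t] assms(1) unfolding q_def by force
  then have "gamma_dR (sierp_vertices n t) (sierp_adj n t) = 3 * q + (if odd t then 3 else 2)"
    using drdf_weight_ge_sierp[OF assms] unfolding q_def by (intro gamma_dR_eqI) simp_all
  moreover have "\<lceil>real (n ^ t) / real (n + 1)\<rceil> = int q + 1"
    unfolding q_def
    by (rule ceiling_of_nat_divide) (use power_mod_Suc_self[of n t] assms(1) in simp_all)
  ultimately show ?thesis by simp
qed

end
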